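(* Let $T>0$ and let $(\Omega,\mathcal{F},P)$ carry a filtration $\{\mathcal{F}_t\}_{t\in[0,T]}$ which is the usual augmentation of the filtration generated by a standard one-dimensional Brownian motion $W$. For each $[0,T]$-valued stopping time $\tau$ let $\mathcal{D}_\tau$ be a linear space of $\mathcal{F}_\tau$-measurable random variables and $\Pi_\tau:\mathcal{D}_T\to\mathcal{D}_\tau$ a map such that for all $X,Y\in\mathcal{D}_T$: (i) $\Pi_\tau(0)=0$; (ii) $\Pi_\tau(X+Y)=\Pi_\tau(X)+Y$ whenever $Y\in\mathcal{D}_\tau$; (iii) if $\Pi_\tau(X)\ge 0$ and $\Pi_\tau(Y)\ge0$, then $\Pi_\tau(\lambda X+(1-\lambda)Y)\ge 0$ for all $\lambda\in[0,1]$; (iv) $\Pi_\tau(X)\ge\Pi_\tau(Y)$ whenever there is a stopping time $\sigma\ge\tau$ with $\Pi_\sigma(X)\ge\Pi_\sigma(Y)$. Let $S,H_{\mathrm M}\in\mathcal{D}_T$. Assume Condition 1: there is a $\mathcal{P}\otimes\mathcal{B}(\mathbb{R})$-measurable $g:\Omega\times[0,T]\times\mathbb{R}\to\mathbb{R}$, $(\omega,t,z)\mapsto g_t(z)(\omega)$ ($\mathcal{P}$ the progressive $\sigma$-field), with $z\mapsto g_t(z)(\omega)$ convex and $g_t(0)(\omega)=0$ for every $(\omega,t)$, such that for every $X\in\mathcal{D}_T$ one has $\sup_{0\le t\le T}|\Pi_t(X)|\in\mathcal{D}_T$ and there is a progressively measurable process $Z(X)$ with $E[\int_0^T|Z_t(X)|^2dt]<\infty$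 and $$X=\Pi_t(X)+\int_t^T g_s(Z_s(X))\,ds-\int_t^T Z_s(X)\,dW_s\quad\text{for all }t\in[0,T].$$ For $y\in\mathbb{R}$ put $Z^y=Z(H_{\mathrm M}-yS)$. Assume Condition 2: there exist $\Omega_0\in\mathcal{F}$ with $P(\Omega_0)=1$ and a $\mathcal{P}\otimes\mathcal{B}(\mathbb{R})$-measurable $Z:\Omega\times[0,T]\times\mathbb{R}\to\mathbb{R}$ with $Z(\omega,t,y)=Z^y_t(\omega)$ for all $(\omega,t,y)\in\Omega_0\times[0,T]\times\mathbb{R}$. Assume Condition 3: there exist $\Omega_0\in\mathcal{F}$ with $P(\Omega_0)=1$ and a $\mathcal{P}\otimes\mathcal{B}(\mathbb{R})$-measurable $Z^-:\Omega\times[0,T]\times\mathbb{R}\to\mathbb{R}$ with $Z(\omega,t,Z^-(\omega,t,z))=z$ for all $(\omega,t,z)\in\Omega_0\times[0,T]\times\mathbb{R}$. Then for every $H_{\mathrm L}\in\mathcal{D}_T$, $$-H_{\mathrm L}=\Pi_0(H_{\mathrm M})-\Pi_0(H_{\mathrm M}+H_{\mathrm L})+\mathcal{I}(Y^\ast),$$ where $Y^\ast_t(\omega)=Z^-(\omega,t,Z_t(H_{\mathrm M}+H_{\mathrm L})(\omega))$.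
   Context: For a predictable process $Y$ write $Z^Y_t(\omega)=Z(\omega,t,Y_t(\omega))$. Let $\mathcal{S}$ be the set of predictable $Y:\Omega\times[0,T]\to\mathbb{R}$ with $\int_0^T|Z^Y_t|^2dt<\infty$. For $Y\in\mathcal{S}$ the (extended) profit and loss of the strategy $Y$ is defined by $$\mathcal{I}(Y)=H_{\mathrm M}-\Pi_0(H_{\mathrm M})-\int_0^T g_t(Z^Y_t)\,dt+\int_0^T Z^Y_t\,dW_t.$$ (For simple predictable $Y$ with $Y_0=0$ this coincides with $Y_TS-\sum_{0\le t<T}P_t(-Y_t,Y_{t+}-Y_t)$, where $P_t(z,y)=\Pi_t(H_{\mathrm M}+zS)-\Pi_t(H_{\mathrm M}+(z-y)S)$.) *)

theory Defs
  imports "HOL-Probability.Probability"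
begin

text \<open>Processes are written time-first for W (W t omega) and omega-first for
integrands (Z omega t), as in the paper's notation Z(omega,t,y).\<close>

definition standard_BM :: "'a measure \<Rightarrow> real \<Rightarrow> (real \<Rightarrow> 'a \<Rightarrow> real) \<Rightarrow> bool" where
  "standard_BM M T W \<longleftrightarrow>
     (\<forall>t\<in>{0..T}. W t \<in> borel_measurable M) \<and>
     (AE \<omega> in M. W 0 \<omega> = 0 \<and> continuous_on {0..T} (\<lambda>t. W t \<omega>)) \<and>
     (\<forall>s t. 0 \<le> s \<longrightarrow> s < t \<longrightarrow> t \<le> T \<longrightarrow>
        distributed M lborel (\<lambda>\<omega>. W t \<omega> - W s \<omega>)
          (\<lambda>x. ennreal (normal_density 0 (sqrt (t - s)) x))) \<and>
     (\<forall>(n::nat) ts. 0 \<le> ts 0 \<longrightarrow> (\<forall>i<n. ts i < ts (Suc i)) \<longrightarrow> ts n \<le> T \<longrightarrow>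
        prob_space.indep_vars M (\<lambda>_. borel) (\<lambda>i \<omega>. W (ts (Suc i)) \<omega> - W (ts i) \<omega>) {..<n})"

text \<open>Usual augmentation of the natural filtration of W on [0,T]:
  F_t = intersection over u > t of sigma(W_s, s \<le> u \<and> T; P-null sets).\<close>
definition filt :: "'a measure \<Rightarrow> real \<Rightarrow> (real \<Rightarrow> 'a \<Rightarrow> real) \<Rightarrow> real \<Rightarrow> 'a set set" where
  "filt M T W t = (\<Inter>u\<in>{t<..}. sigma_sets (space M)
      ((\<Union>s\<in>{0..min u T}. {W s -` B \<inter> space M | B. B \<in> sets (borel :: real measure)})
        \<union> null_sets M))"

definition filt_meas :: "'a measure \<Rightarrow> real \<Rightarrow> (real \<Rightarrow> 'a \<Rightarrow> real) \<Rightarrow> real \<Rightarrow> 'a measure" where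
  "filt_meas M T W t = sigma (space M) (filt M T W t)"

definition prog :: "'a measure \<Rightarrow> real \<Rightarrow> (real \<Rightarrow> 'a \<Rightarrow> real) \<Rightarrow> ('a \<times> real) measure" where
  "prog M T W = sigma (space M \<times> {0..T})
     {A. A \<subseteq> space M \<times> {0..T} \<and>
        (\<forall>t\<in>{0..T}. A \<inter> (space M \<times> {0..t}) \<in>
            sets (filt_meas M T W t \<Otimes>\<^sub>M restrict_space borel {0..t}))}"

definition progressive :: "'a measure \<Rightarrow> real \<Rightarrow> (real \<Rightarrow> 'a \<Rightarrow> real) \<Rightarrow> ('a \<Rightarrow> real \<Rightarrow> real) \<Rightarrow> bool" where
  "progressive M T W Z \<longleftrightarrow> (\<lambda>x. Z (fst x) (snd x)) \<in> borel_measurable (prog M T W)"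

definition prog_borel_meas :: "'a measure \<Rightarrow> real \<Rightarrow> (real \<Rightarrow> 'a \<Rightarrow> real) \<Rightarrow> ('a \<Rightarrow> real \<Rightarrow> real \<Rightarrow> real) \<Rightarrow> bool" where
  "prog_borel_meas M T W f \<longleftrightarrow>
     (\<lambda>p. f (fst (fst p)) (snd (fst p)) (snd p)) \<in> borel_measurable (prog M T W \<Otimes>\<^sub>M borel)"

definition stop_time :: "'a measure \<Rightarrow> real \<Rightarrow> (real \<Rightarrow> 'a \<Rightarrow> real) \<Rightarrow> ('a \<Rightarrow> real) \<Rightarrow> bool" where
  "stop_time M T W \<tau> \<longleftrightarrow> \<tau> \<in> space M \<rightarrow> {0..T} \<and>
     (\<forall>t\<in>{0..T}. {\<omega>\<in>space M. \<tau> \<omega> \<le> t} \<in> filt M T W t)"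

definition filt_at :: "'a measure \<Rightarrow> real \<Rightarrow> (real \<Rightarrow> 'a \<Rightarrow> real) \<Rightarrow> ('a \<Rightarrow> real) \<Rightarrow> 'a measure" where
  "filt_at M T W \<tau> = sigma (space M)
     {A \<in> filt M T W T. \<forall>t\<in>{0..T}. A \<inter> {\<omega>\<in>space M. \<tau> \<omega> \<le> t} \<in> filt M T W t}"

definition simple_proc :: "(nat \<Rightarrow> real) \<Rightarrow> (nat \<Rightarrow> 'a \<Rightarrow> real) \<Rightarrow> nat \<Rightarrow> 'a \<Rightarrow> real \<Rightarrow> real" where
  "simple_proc ts \<xi> n \<omega> s = (\<Sum>i<n. \<xi> i \<omega> * indicator {ts i<..ts (Suc i)} s)"

definition is_simple :: "'a measure \<Rightarrow> real \<Rightarrow> (real \<Rightarrow> 'a \<Rightarrow> real) \<Rightarrow> (nat \<Rightarrow> real) \<Rightarrow> (nat \<Rightarrow> 'a \<Rightarrow> real) \<Rightarrow> nat \<Rightarrow> bool" where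
  "is_simple M T W ts \<xi> n \<longleftrightarrow> 0 \<le> ts 0 \<and> (\<forall>i<n. ts i < ts (Suc i)) \<and> ts n \<le> T \<and>
     (\<forall>i<n. \<xi> i \<in> borel_measurable (filt_meas M T W (ts i)))"

definition simple_int :: "(real \<Rightarrow> 'a \<Rightarrow> real) \<Rightarrow> (nat \<Rightarrow> real) \<Rightarrow> (nat \<Rightarrow> 'a \<Rightarrow> real) \<Rightarrow> nat \<Rightarrow> real \<Rightarrow> real \<Rightarrow> 'a \<Rightarrow> real" where
  "simple_int W ts \<xi> n a b \<omega> =
     (\<Sum>i<n. \<xi> i \<omega> * (W (max a (min b (ts (Suc i)))) \<omega> - W (max a (min b (ts i))) \<omega>))"

definition conv_in_prob :: "'a measure \<Rightarrow> (nat \<Rightarrow> 'a \<Rightarrow> real) \<Rightarrow> ('a \<Rightarrow> real) \<Rightarrow> bool" where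
  "conv_in_prob M Xs X \<longleftrightarrow>
     (\<forall>e>0. (\<lambda>k. measure M {\<omega>\<in>space M. e < \<bar>Xs k \<omega> - X \<omega>\<bar>}) \<longlonglongrightarrow> 0)"

definition conv_in_prob_zero_enn :: "'a measure \<Rightarrow> (nat \<Rightarrow> 'a \<Rightarrow> ennreal) \<Rightarrow> bool" where
  "conv_in_prob_zero_enn M D \<longleftrightarrow>
     (\<forall>e>0. (\<lambda>k. measure M {\<omega>\<in>space M. ennreal e < D k \<omega>}) \<longlonglongrightarrow> 0)"

text \<open>Ito integral of Z over [a,b] (0 \<le> a \<le> b \<le> T): the limit in probability of the
  integrals of simple predictable processes approximating Z in the sense
  int_0^T |Z^k - Z|^2 dt \<rightarrow> 0 in probability (defined up to a.s. equality).\<close>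
definition ito_int :: "'a measure \<Rightarrow> real \<Rightarrow> (real \<Rightarrow> 'a \<Rightarrow> real) \<Rightarrow> ('a \<Rightarrow> real \<Rightarrow> real) \<Rightarrow> real \<Rightarrow> real \<Rightarrow> 'a \<Rightarrow> real" where
  "ito_int M T W Z a b = (SOME X. X \<in> borel_measurable M \<and>
     (\<forall>ts \<xi> ns. (\<forall>k. is_simple M T W (ts k) (\<xi> k) (ns k)) \<longrightarrow>
        conv_in_prob_zero_enn M (\<lambda>k \<omega>. \<integral>\<^sup>+ s\<in>{0..T}. ennreal ((simple_proc (ts k) (\<xi> k) (ns k) \<omega> s - Z \<omega> s)\<^sup>2) \<partial>lborel) \<longrightarrow>
        conv_in_prob M (\<lambda>k. simple_int W (ts k) (\<xi> k) (ns k) a b) X))"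

text \<open>I(Y) = H_M - Pi_0(H_M) - int_0^T g_t(Z^Y_t) dt + int_0^T Z^Y_t dW_t,
  with Z^Y_t(omega) = Zf omega t (Y omega t); Pi0HM is Pi_0(H_M).\<close>
definition PnL :: "'a measure \<Rightarrow> real \<Rightarrow> (real \<Rightarrow> 'a \<Rightarrow> real) \<Rightarrow> ('a \<Rightarrow> real \<Rightarrow> real \<Rightarrow> real)
    \<Rightarrow> ('a \<Rightarrow> real \<Rightarrow> real \<Rightarrow> real) \<Rightarrow> ('a \<Rightarrow> real) \<Rightarrow> ('a \<Rightarrow> real) \<Rightarrow> ('a \<Rightarrow> real \<Rightarrow> real) \<Rightarrow> 'a \<Rightarrow> real" where
  "PnL M T W g Zf HM Pi0HM Y \<omega> =
     HM \<omega> - Pi0HM \<omega> - (\<integral>s\<in>{0..T}. g \<omega> s (Zf \<omega> s (Y \<omega> s)) \<partial>lborel)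
     + ito_int M T W (\<lambda>\<omega>' s. Zf \<omega>' s (Y \<omega>' s)) 0 T \<omega>"

end

theory Submission
  imports Defs
begin

text \<open>Condition 3 makes the integrand of the optimal strategy equal to \<open>Z(H_M + H_L)\<close>
  almost surely, so \<open>\<I>(Y\<^sup>*) = H_M - \<Pi>\<^sub>0(H_M) - \<integral> g(Z(H_M + H_L)) dt + \<integral> Z(H_M + H_L) dW\<close>,
  and the BSDE of \<open>H_M + H_L\<close> at time 0 identifies the last two terms with
  \<open>\<Pi>\<^sub>0(H_M + H_L) - H_M - H_L\<close>. Completeness of the measure is what lets the Ito integral,
  defined through measures of possibly non-measurable sets, ignore a null set of paths.\<close>

lemma (in complete_measure) measure_eq_AE_complete:
  assumes iff: "AE x in M. x \<in> A \<longleftrightarrow> x \<in> B" and A: "A \<subseteq> space M" and B: "B \<subseteq> space M"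
  shows "measure M A = measure M B"
proof (cases "A \<in> sets M")
  case True
  have "B \<in> sets M" by (rule in_sets_AE[OF iff True B])
  with True show ?thesis by (rule measure_eq_AE[OF iff])
next
  case False
  have "AE x in M. x \<in> B \<longleftrightarrow> x \<in> A" using iff by eventually_elim blast
  then have "B \<notin> sets M" using False in_sets_AE[of B A] A by blast
  with False show ?thesis by (simp add: measure_notin_sets)
qed

lemma conv_in_prob_zero_enn_cong_AE:
  assumes "complete_measure M" and "AE \<omega> in M. \<forall>k. D1 k \<omega> = D2 k \<omega>"
  shows "conv_in_prob_zero_enn M D1 = conv_in_prob_zero_enn M D2"
proof -
  have "measure M {\<omega>\<in>space M. ennreal e < D1 k \<omega>} = measure M {\<omega>\<in>space M. ennreal e < D2 k \<omega>}"
    for e k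
    by (rule complete_measure.measure_eq_AE_complete[OF assms(1)])
      (use assms(2) in \<open>auto elim: AE_mp\<close>)
  then show ?thesis unfolding conv_in_prob_zero_enn_def by simp
qed

lemma ito_int_cong_AE:
  assumes "complete_measure M" and "AE \<omega> in M. \<forall>s\<in>{0..T}. Z1 \<omega> s = Z2 \<omega> s"
  shows "ito_int M T W Z1 a b = ito_int M T W Z2 a b"
proof -
  have "conv_in_prob_zero_enn M
          (\<lambda>k \<omega>. \<integral>\<^sup>+ s\<in>{0..T}. ennreal ((simple_proc (ts k) (\<xi> k) (ns k) \<omega> s - Z1 \<omega> s)\<^sup>2) \<partial>lborel)
      = conv_in_prob_zero_enn M
          (\<lambda>k \<omega>. \<integral>\<^sup>+ s\<in>{0..T}. ennreal ((simple_proc (ts k) (\<xi> k) (ns k) \<omega> s - Z2 \<omega> s)\<^sup>2) \<partial>lborel)"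
    for ts \<xi> ns
    using assms(2)
    by (intro conv_in_prob_zero_enn_cong_AE[OF assms(1)])
      (auto elim!: AE_mp intro!: nn_integral_cong split: split_indicator)
  then show ?thesis unfolding ito_int_def by simp
qed

lemma PnL_eq_AE:
  assumes "complete_measure M" and "AE \<omega> in M. \<forall>s\<in>{0..T}. Zf \<omega> s (Y \<omega> s) = Z \<omega> s"
  shows "AE \<omega> in M. PnL M T W g Zf HM Pi0HM Y \<omega>
           = HM \<omega> - Pi0HM \<omega> - (\<integral>s\<in>{0..T}. g \<omega> s (Z \<omega> s) \<partial>lborel) + ito_int M T W Z 0 T \<omega>"
  using assms(2)
proof eventually_elim
  case (elim \<omega>)
  have "(\<integral>s\<in>{0..T}. g \<omega> s (Zf \<omega> s (Y \<omega> s)) \<partial>lborel) = (\<integral>s\<in>{0..T}. g \<omega> s (Z \<omega> s) \<partial>lborel)"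
    using elim by (intro set_lebesgue_integral_cong) auto
  moreover have "ito_int M T W (\<lambda>\<omega>' s. Zf \<omega>' s (Y \<omega>' s)) 0 T = ito_int M T W Z 0 T"
    by (rule ito_int_cong_AE[OF assms])
  ultimately show ?case unfolding PnL_def by simp
qed

lemma stop_time_const:
  assumes "c \<in> {0..T}"
  shows "stop_time M T W (\<lambda>_. c)"
  unfolding stop_time_def filt_def
proof (intro conjI ballI)
  fix t
  show "{\<omega>\<in>space M. c \<le> t} \<in> (\<Inter>u\<in>{t<..}. sigma_sets (space M)
      ((\<Union>s\<in>{0..min u T}. {W s -` B \<inter> space M | B. B \<in> sets (borel :: real measure)})
        \<union> null_sets M))"
    by (cases "c \<le> t") (auto intro: sigma_sets_top sigma_sets.Empty)
qed (use assms in auto)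

theorem theorem1:
  fixes M :: "'a measure" and T :: real and W :: "real \<Rightarrow> 'a \<Rightarrow> real"
    and D :: "('a \<Rightarrow> real) \<Rightarrow> ('a \<Rightarrow> real) set"
    and Pr :: "('a \<Rightarrow> real) \<Rightarrow> ('a \<Rightarrow> real) \<Rightarrow> 'a \<Rightarrow> real"
    and S HM HL :: "'a \<Rightarrow> real"
    and g :: "'a \<Rightarrow> real \<Rightarrow> real \<Rightarrow> real"
    and Zp :: "('a \<Rightarrow> real) \<Rightarrow> 'a \<Rightarrow> real \<Rightarrow> real"
    and Zf Zm :: "'a \<Rightarrow> real \<Rightarrow> real \<Rightarrow> real"
  assumes prob: "prob_space M" and complete: "complete_measure M"
    and Tpos: "T > 0"
    and BM: "standard_BM M T W"
    \<comment> \<open>the spaces D_tau: linear spaces of F_tau-measurable random variables\<close>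
    and D_meas: "\<And>\<tau> X. stop_time M T W \<tau> \<Longrightarrow> X \<in> D \<tau> \<Longrightarrow> X \<in> borel_measurable (filt_at M T W \<tau>)"
    and D_zero: "\<And>\<tau>. stop_time M T W \<tau> \<Longrightarrow> (\<lambda>_. 0) \<in> D \<tau>"
    and D_add: "\<And>\<tau> X Y. stop_time M T W \<tau> \<Longrightarrow> X \<in> D \<tau> \<Longrightarrow> Y \<in> D \<tau> \<Longrightarrow> (\<lambda>\<omega>. X \<omega> + Y \<omega>) \<in> D \<tau>"
    and D_scale: "\<And>\<tau> X c. stop_time M T W \<tau> \<Longrightarrow> X \<in> D \<tau> \<Longrightarrow> (\<lambda>\<omega>. c * X \<omega>) \<in> D \<tau>"
    \<comment> \<open>Pi_tau maps D_T into D_tau\<close>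
    and Pi_into: "\<And>\<tau> X. stop_time M T W \<tau> \<Longrightarrow> X \<in> D (\<lambda>_. T) \<Longrightarrow> Pr \<tau> X \<in> D \<tau>"
    \<comment> \<open>(i)\<close>
    and Pi_zero: "\<And>\<tau>. stop_time M T W \<tau> \<Longrightarrow> AE \<omega> in M. Pr \<tau> (\<lambda>_. 0) \<omega> = 0"
    \<comment> \<open>(ii)\<close>
    and Pi_cash: "\<And>\<tau> X Y. stop_time M T W \<tau> \<Longrightarrow> X \<in> D (\<lambda>_. T) \<Longrightarrow> Y \<in> D (\<lambda>_. T) \<Longrightarrow> Y \<in> D \<tau> \<Longrightarrow>
        AE \<omega> in M. Pr \<tau> (\<lambda>\<omega>'. X \<omega>' + Y \<omega>') \<omega> = Pr \<tau> X \<omega> + Y \<omega>"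
    \<comment> \<open>(iii)\<close>
    and Pi_qconc: "\<And>\<tau> X Y lam. stop_time M T W \<tau> \<Longrightarrow> X \<in> D (\<lambda>_. T) \<Longrightarrow> Y \<in> D (\<lambda>_. T) \<Longrightarrow>
        (AE \<omega> in M. Pr \<tau> X \<omega> \<ge> 0) \<Longrightarrow> (AE \<omega> in M. Pr \<tau> Y \<omega> \<ge> 0) \<Longrightarrow> lam \<in> {0..1} \<Longrightarrow>
        AE \<omega> in M. Pr \<tau> (\<lambda>\<omega>'. lam * X \<omega>' + (1 - lam) * Y \<omega>') \<omega> \<ge> 0"
    \<comment> \<open>(iv)\<close>
    and Pi_tc: "\<And>\<tau> \<sigma> X Y. stop_time M T W \<tau> \<Longrightarrow> stop_time M T W \<sigma> \<Longrightarrow>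
        (\<forall>\<omega>\<in>space M. \<tau> \<omega> \<le> \<sigma> \<omega>) \<Longrightarrow> X \<in> D (\<lambda>_. T) \<Longrightarrow> Y \<in> D (\<lambda>_. T) \<Longrightarrow>
        (AE \<omega> in M. Pr \<sigma> X \<omega> \<ge> Pr \<sigma> Y \<omega>) \<Longrightarrow> AE \<omega> in M. Pr \<tau> X \<omega> \<ge> Pr \<tau> Y \<omega>"
    and S_D: "S \<in> D (\<lambda>_. T)" and HM_D: "HM \<in> D (\<lambda>_. T)" and HL_D: "HL \<in> D (\<lambda>_. T)"
    \<comment> \<open>Condition 1\<close>
    and g_meas: "prog_borel_meas M T W g"
    and g_convex: "\<And>\<omega> t. convex_on UNIV (g \<omega> t)"
    and g_zero: "\<And>\<omega> t. g \<omega> t 0 = 0"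
    and sup_D: "\<And>X. X \<in> D (\<lambda>_. T) \<Longrightarrow> (\<lambda>\<omega>. SUP t\<in>{0..T}. \<bar>Pr (\<lambda>_. t) X \<omega>\<bar>) \<in> D (\<lambda>_. T)"
    and Zp_prog: "\<And>X. X \<in> D (\<lambda>_. T) \<Longrightarrow> progressive M T W (Zp X)"
    and Zp_sq: "\<And>X. X \<in> D (\<lambda>_. T) \<Longrightarrow>
        (\<integral>\<^sup>+ \<omega>. (\<integral>\<^sup>+ s\<in>{0..T}. ennreal ((Zp X \<omega> s)\<^sup>2) \<partial>lborel) \<partial>M) < \<infinity>"
    and Zp_gint: "\<And>X. X \<in> D (\<lambda>_. T) \<Longrightarrow>
        AE \<omega> in M. set_integrable lborel {0..T} (\<lambda>s. g \<omega> s (Zp X \<omega> s))"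
    and BSDE: "\<And>X t. X \<in> D (\<lambda>_. T) \<Longrightarrow> t \<in> {0..T} \<Longrightarrow>
        AE \<omega> in M. X \<omega> = Pr (\<lambda>_. t) X \<omega> + (\<integral>s\<in>{t..T}. g \<omega> s (Zp X \<omega> s) \<partial>lborel)
                          - ito_int M T W (Zp X) t T \<omega>"
    \<comment> \<open>Condition 2 (Z^y = Zp (HM - y S))\<close>
    and cond2: "\<exists>\<Omega>0\<in>sets M. prob_space.prob M \<Omega>0 = 1 \<and> prog_borel_meas M T W Zf \<and>
        (\<forall>\<omega>\<in>\<Omega>0. \<forall>t\<in>{0..T}. \<forall>y. Zf \<omega> t y = Zp (\<lambda>\<omega>'. HM \<omega>' - y * S \<omega>') \<omega> t)"
    \<comment> \<open>Condition 3\<close>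
    and cond3: "\<exists>\<Omega>0\<in>sets M. prob_space.prob M \<Omega>0 = 1 \<and> prog_borel_meas M T W Zm \<and>
        (\<forall>\<omega>\<in>\<Omega>0. \<forall>t\<in>{0..T}. \<forall>z. Zf \<omega> t (Zm \<omega> t z) = z)"
  shows "AE \<omega> in M.
     - HL \<omega> = Pr (\<lambda>_. 0) HM \<omega> - Pr (\<lambda>_. 0) (\<lambda>\<omega>'. HM \<omega>' + HL \<omega>') \<omega>
       + PnL M T W g Zf HM (Pr (\<lambda>_. 0) HM)
           (\<lambda>\<omega>' t. Zm \<omega>' t (Zp (\<lambda>\<omega>''. HM \<omega>'' + HL \<omega>'') \<omega>' t)) \<omega>"
proof -
  interpret P: prob_space M by (rule prob)
  define X where "X = (\<lambda>\<omega>'. HM \<omega>' + HL \<omega>')"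
  have T_in: "T \<in> {0..T}" and zero_in: "0 \<in> {0..T}" using Tpos by auto
  have XD: "X \<in> D (\<lambda>_. T)"
    unfolding X_def by (rule D_add[OF stop_time_const[OF T_in] HM_D HL_D])
  have "AE \<omega> in M. \<forall>t\<in>{0..T}. \<forall>z. Zf \<omega> t (Zm \<omega> t z) = z"
    using cond3 by (auto dest!: P.AE_prob_1 elim: AE_mp)
  then have "AE \<omega> in M. \<forall>s\<in>{0..T}. Zf \<omega> s (Zm \<omega> s (Zp X \<omega> s)) = Zp X \<omega> s"
    by eventually_elim blast
  then have "AE \<omega> in M. PnL M T W g Zf HM (Pr (\<lambda>_. 0) HM) (\<lambda>\<omega>' t. Zm \<omega>' t (Zp X \<omega>' t)) \<omega>
      = HM \<omega> - Pr (\<lambda>_. 0) HM \<omega> - (\<integral>s\<in>{0..T}. g \<omega> s (Zp X \<omega> s) \<partial>lborel)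
        + ito_int M T W (Zp X) 0 T \<omega>"
    by (rule PnL_eq_AE[OF complete])
  with BSDE[OF XD zero_in] show ?thesis
    unfolding X_def by eventually_elim simp
qed

end
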